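(* Let $G$ be a graph with at least one isolated vertex such that $G\ne\widetilde G$. If $G$ has a minimum twin cover that is also a determining set for $G$, then for every $t\ge1$, \[\det(\mu_t(G))=(t+1)\det(G)+t-1.\]
   Context: All graphs are finite and simple. For a graph $G$ with $V(G)=\{v_1,\dots,v_n\}$ and an integer $t\ge1$, the generalized Mycielskian $\mu_t(G)$ has vertex set $\{u_i^s: 1\le i\le n,\ 0\le s\le t\}\cup\{w\}$, where $u_i^0$ is identified with $v_i$. Its edges are: $u_i^0u_j^0$ for each edge $v_iv_j$ of $G$; $u_i^su_j^{s+1}$ and $u_j^su_i^{s+1}$ for each edge $v_iv_j$ of $G$ and each $0\le s<t$; and $u_i^tw$ for all $1\le i\le n$. A set $S\subseteq V(G)$ is a determining set for $G$ if the only automorphism of $G$ fixing every vertex of $S$ is the identity; $\det(G)$ is the minimum size of a determining set. Two vertices are twins if they have the same open neighborhood; being twins is an equivalence relation on $V(G)$, and the twin quotient $\widetilde G$ has the equivalence classes as vertices, with two classes adjacent iff some members are adjacent in $G$ ($G\ne\widetilde G$ means $G$ has a pair of distinct twins). A minimum twin cover is a minimum-size vertex subset containing at least one vertex from every pair of distinct twins. *)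

theory Defs
  imports Main
begin

definition graph :: "'a set \<Rightarrow> ('a \<Rightarrow> 'a \<Rightarrow> bool) \<Rightarrow> bool" where
  "graph V E \<longleftrightarrow> finite V \<and> (\<forall>x y. E x y \<longrightarrow> x \<in> V \<and> y \<in> V)
     \<and> (\<forall>x y. E x y \<longrightarrow> E y x) \<and> (\<forall>x. \<not> E x x)"

definition automorphism :: "'a set \<Rightarrow> ('a \<Rightarrow> 'a \<Rightarrow> bool) \<Rightarrow> ('a \<Rightarrow> 'a) \<Rightarrow> bool" where
  "automorphism V E f \<longleftrightarrow> bij_betw f V V \<and> (\<forall>x\<in>V. \<forall>y\<in>V. E (f x) (f y) \<longleftrightarrow> E x y)"

definition determining_set :: "'a set \<Rightarrow> ('a \<Rightarrow> 'a \<Rightarrow> bool) \<Rightarrow> 'a set \<Rightarrow> bool" where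
  "determining_set V E S \<longleftrightarrow> S \<subseteq> V \<and>
     (\<forall>f. automorphism V E f \<and> (\<forall>x\<in>S. f x = x) \<longrightarrow> (\<forall>x\<in>V. f x = x))"

definition det_num :: "'a set \<Rightarrow> ('a \<Rightarrow> 'a \<Rightarrow> bool) \<Rightarrow> nat" where
  "det_num V E = Min {card S | S. determining_set V E S}"

definition open_nbhd :: "'a set \<Rightarrow> ('a \<Rightarrow> 'a \<Rightarrow> bool) \<Rightarrow> 'a \<Rightarrow> 'a set" where
  "open_nbhd V E v = {x \<in> V. E v x}"

definition twins :: "'a set \<Rightarrow> ('a \<Rightarrow> 'a \<Rightarrow> bool) \<Rightarrow> 'a \<Rightarrow> 'a \<Rightarrow> bool" where
  "twins V E u v \<longleftrightarrow> u \<in> V \<and> v \<in> V \<and> open_nbhd V E u = open_nbhd V E v"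

text \<open>G differs from its twin quotient iff it has a pair of distinct twins.\<close>
definition has_distinct_twins :: "'a set \<Rightarrow> ('a \<Rightarrow> 'a \<Rightarrow> bool) \<Rightarrow> bool" where
  "has_distinct_twins V E \<longleftrightarrow> (\<exists>u v. u \<noteq> v \<and> twins V E u v)"

definition twin_cover :: "'a set \<Rightarrow> ('a \<Rightarrow> 'a \<Rightarrow> bool) \<Rightarrow> 'a set \<Rightarrow> bool" where
  "twin_cover V E S \<longleftrightarrow> S \<subseteq> V \<and>
     (\<forall>u v. u \<noteq> v \<and> twins V E u v \<longrightarrow> u \<in> S \<or> v \<in> S)"

definition min_twin_cover :: "'a set \<Rightarrow> ('a \<Rightarrow> 'a \<Rightarrow> bool) \<Rightarrow> 'a set \<Rightarrow> bool" where
  "min_twin_cover V E S \<longleftrightarrow> twin_cover V E S \<and>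
     (\<forall>T. twin_cover V E T \<longrightarrow> card S \<le> card T)"

definition isolated :: "'a set \<Rightarrow> ('a \<Rightarrow> 'a \<Rightarrow> bool) \<Rightarrow> 'a \<Rightarrow> bool" where
  "isolated V E v \<longleftrightarrow> v \<in> V \<and> (\<forall>u\<in>V. \<not> E v u)"

text \<open>Generalized Mycielskian: vertex Some (v,s) is u_v^s (0 \<le> s \<le> t), None is w.\<close>
definition myc_V :: "'a set \<Rightarrow> nat \<Rightarrow> ('a \<times> nat) option set" where
  "myc_V V t = {Some (v, s) | v s. v \<in> V \<and> s \<le> t} \<union> {None}"

definition myc_E :: "'a set \<Rightarrow> ('a \<Rightarrow> 'a \<Rightarrow> bool) \<Rightarrow> nat
    \<Rightarrow> ('a \<times> nat) option \<Rightarrow> ('a \<times> nat) option \<Rightarrow> bool" where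
  "myc_E V E t x y = (case (x, y) of
      (Some (u, s), Some (v, r)) \<Rightarrow> u \<in> V \<and> v \<in> V \<and> s \<le> t \<and> r \<le> t \<and> E u v \<and>
            ((s = 0 \<and> r = 0) \<or> r = s + 1 \<or> s = r + 1)
    | (Some (u, s), None) \<Rightarrow> u \<in> V \<and> s = t
    | (None, Some (v, r)) \<Rightarrow> v \<in> V \<and> r = t
    | (None, None) \<Rightarrow> False)"

end

theory Submission
  imports Defs
begin

text \<open>
  Swapping two twins is an automorphism, so a determining set meets every pair of distinct twins;
  hence a minimum twin cover S that is determining gives \<open>det(G) = |S|\<close>. Moreover S misses
  exactly one isolated vertex \<open>i\<^sub>0\<close>, since all isolated vertices are mutual twins.

  Lower bound: twins of G stay twins on each layer of \<open>\<mu>\<^sub>t(G)\<close>, and all isolated vertices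
  on the layers \<open>0..t-1\<close> are mutual twins there. So a determining set of \<open>\<mu>\<^sub>t(G)\<close> meets
  every layer in a twin cover of G, and on all but one of the layers \<open>0..t-1\<close> that cover
  contains every isolated vertex and is therefore larger than S.

  Upper bound: the set \<open>S \<times> {0..t} \<union> {i\<^sub>0} \<times> {1..t-1}\<close> is determining. Any automorphism
  fixes the apex w, the only neighbour of the pendant vertex \<open>u\<^sub>i\<^sub>0\<^sup>t\<close>; so it preserves the
  distance from w, which is 1 on layer t, \<open>t - s + 1\<close> for a non-isolated vertex on layer s,
  and infinite for an isolated vertex below layer t. Hence it preserves the layers of
  non-isolated vertices, and permutes the low isolated vertices, all of which but \<open>u\<^sub>i\<^sub>0\<^sup>0\<close>
  are fixed. On layer 0 it then induces an automorphism of G fixing S, i.e. the identity;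
  going up, it maps each vertex on layer \<open>s+1\<close> to a twin (their neighbourhoods on the fixed
  layer s agree), which is fixed unless the vertex lies in S. The last vertex \<open>u\<^sub>i\<^sub>0\<^sup>t\<close>
  is fixed because everything else is.
\<close>

lemma graph_adj_sym: "graph V E \<Longrightarrow> E x y \<Longrightarrow> E y x"
  unfolding graph_def by blast

lemma graph_adj_mem: "graph V E \<Longrightarrow> E x y \<Longrightarrow> x \<in> V \<and> y \<in> V"
  unfolding graph_def by blast

lemma automorphism_mem: "automorphism V E f \<Longrightarrow> x \<in> V \<Longrightarrow> f x \<in> V"
  unfolding automorphism_def bij_betw_def by auto

lemma automorphism_eq_iff:
  "automorphism V E f \<Longrightarrow> x \<in> V \<Longrightarrow> y \<in> V \<Longrightarrow> f x = f y \<longleftrightarrow> x = y"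
  unfolding automorphism_def bij_betw_def inj_on_def by auto

lemma automorphism_surj: "automorphism V E f \<Longrightarrow> y \<in> V \<Longrightarrow> \<exists>x\<in>V. f x = y"
  unfolding automorphism_def bij_betw_def by (metis imageE)

lemma automorphism_adj_iff:
  "automorphism V E f \<Longrightarrow> x \<in> V \<Longrightarrow> y \<in> V \<Longrightarrow> E (f x) (f y) \<longleftrightarrow> E x y"
  unfolding automorphism_def by blast

lemma automorphism_fixed_if_image_fixed:
  "automorphism V E f \<Longrightarrow> x \<in> V \<Longrightarrow> f (f x) = f x \<Longrightarrow> f x = x"
  using automorphism_eq_iff automorphism_mem by metis

lemma twins_adj_iff: "graph V E \<Longrightarrow> twins V E u v \<Longrightarrow> E u x \<longleftrightarrow> E v x"
  unfolding graph_def twins_def open_nbhd_def by blast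

lemma automorphism_swap_twins:
  assumes G: "graph V E" and uv: "twins V E u v"
  shows "automorphism V E (id(u := v, v := u))" (is "automorphism V E ?g")
proof -
  have "u \<in> V" "v \<in> V" using uv unfolding twins_def by auto
  then have bij: "bij_betw ?g V V"
    unfolding bij_betw_def inj_on_def by auto
  have swap_adj: "E (?g a) z \<longleftrightarrow> E a z" for a z
    using twins_adj_iff[OF G uv, of z] by (cases "a = u"; cases "a = v") simp_all
  have "E (?g x) (?g y) \<longleftrightarrow> E x y" for x y
    using swap_adj[of x "?g y"] swap_adj[of y x] graph_adj_sym[OF G] by blast
  with bij show ?thesis unfolding automorphism_def by blast
qed

lemma twin_coverD: "twin_cover V E S \<Longrightarrow> u \<noteq> v \<Longrightarrow> twins V E u v \<Longrightarrow> u \<in> S \<or> v \<in> S"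
  unfolding twin_cover_def by blast

lemma determining_set_imp_twin_cover:
  assumes G: "graph V E" and D: "determining_set V E D"
  shows "twin_cover V E D"
  unfolding twin_cover_def
proof (intro conjI allI impI)
  show "D \<subseteq> V" using D unfolding determining_set_def by blast
  fix u v assume uv: "u \<noteq> v \<and> twins V E u v"
  show "u \<in> D \<or> v \<in> D"
  proof (rule ccontr)
    assume "\<not> (u \<in> D \<or> v \<in> D)"
    then have "\<forall>x\<in>D. (id(u := v, v := u)) x = x" by auto
    moreover have "u \<in> V" using uv unfolding twins_def by blast
    ultimately have "(id(u := v, v := u)) u = u"
      using D automorphism_swap_twins[OF G] uv unfolding determining_set_def by blast
    with uv show False by simp
  qed
qed

lemma det_num_eqI:
  assumes "finite V" and D: "determining_set V E D"
    and min: "\<And>D'. determining_set V E D' \<Longrightarrow> card D \<le> card D'"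
  shows "det_num V E = card D"
proof -
  have "{card D' | D'. determining_set V E D'} \<subseteq> card ` Pow V"
    unfolding determining_set_def by auto
  then have "finite {card D' | D'. determining_set V E D'}"
    using \<open>finite V\<close> finite_subset by blast
  then show ?thesis
    unfolding det_num_def using D min by (intro Min_eqI) auto
qed

lemma twins_isolated: "twins V E u v \<Longrightarrow> isolated V E u \<Longrightarrow> isolated V E v"
  unfolding isolated_def twins_def open_nbhd_def by blast

lemma isolated_twins: "isolated V E u \<Longrightarrow> isolated V E v \<Longrightarrow> twins V E u v"
  unfolding isolated_def twins_def open_nbhd_def by auto

lemma twin_cover_isolated_mem:
  "twin_cover V E S \<Longrightarrow> isolated V E i \<Longrightarrow> isolated V E j \<Longrightarrow> j \<notin> S \<Longrightarrow> i \<noteq> j \<Longrightarrow> i \<in> S"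
  unfolding twin_cover_def by (metis isolated_twins)

lemma min_twin_cover_card_less:
  assumes S: "min_twin_cover V E S" and X: "twin_cover V E X" "finite X"
    and i: "isolated V E i" and iso_X: "\<And>j. isolated V E j \<Longrightarrow> j \<in> X"
  shows "card S < card X"
proof -
  have "twin_cover V E (X - {i})"
    unfolding twin_cover_def
  proof (intro conjI allI impI)
    show "X - {i} \<subseteq> V" using X unfolding twin_cover_def by blast
    fix u v assume uv: "u \<noteq> v \<and> twins V E u v"
    have "twins V E v u" using uv unfolding twins_def by auto
    then have "u = i \<Longrightarrow> v \<in> X" "v = i \<Longrightarrow> u \<in> X"
      using uv i by (auto intro: iso_X dest: twins_isolated)
    moreover have "u \<in> X \<or> v \<in> X" using twin_coverD[OF X(1)] uv by blast
    ultimately show "u \<in> X - {i} \<or> v \<in> X - {i}" using uv by blast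
  qed
  then have "card S \<le> card (X - {i})" using S unfolding min_twin_cover_def by blast
  also have "\<dots> < card X" using X(2) iso_X[OF i] by (rule card_Diff1_less)
  finally show ?thesis .
qed

lemma min_twin_cover_misses_isolated:
  assumes G: "graph V E" and S: "min_twin_cover V E S" and i: "isolated V E i"
  obtains i0 where "isolated V E i0" "i0 \<notin> S"
proof -
  have "S \<subseteq> V" using S unfolding min_twin_cover_def twin_cover_def by blast
  then have "finite S" using G finite_subset unfolding graph_def by blast
  then have "\<not> (\<forall>j. isolated V E j \<longrightarrow> j \<in> S)"
    using min_twin_cover_card_less[OF S _ _ i] S unfolding min_twin_cover_def by blast
  then show ?thesis using that by blast
qed

lemma det_num_eq_min_twin_cover:
  assumes G: "graph V E" and S: "min_twin_cover V E S" "determining_set V E S"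
  shows "det_num V E = card S"
  using G S determining_set_imp_twin_cover[OF G] unfolding graph_def min_twin_cover_def
  by (blast intro: det_num_eqI)

lemma myc_V_simps [simp]:
  "Some (v, s) \<in> myc_V V t \<longleftrightarrow> v \<in> V \<and> s \<le> t"
  "None \<in> myc_V V t"
  unfolding myc_V_def by auto

lemma myc_E_simps [simp]:
  "myc_E V E t (Some (u, s)) (Some (v, r)) \<longleftrightarrow>
     u \<in> V \<and> v \<in> V \<and> s \<le> t \<and> r \<le> t \<and> E u v \<and> ((s = 0 \<and> r = 0) \<or> r = s + 1 \<or> s = r + 1)"
  "myc_E V E t (Some (u, s)) None \<longleftrightarrow> u \<in> V \<and> s = t"
  "myc_E V E t None (Some (u, s)) \<longleftrightarrow> u \<in> V \<and> s = t"
  "\<not> myc_E V E t None None"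
  unfolding myc_E_def by auto

lemma myc_V_eq: "myc_V V t = Some ` (V \<times> {..t}) \<union> {None}"
  unfolding myc_V_def by auto

lemma graph_myc: "graph V E \<Longrightarrow> graph (myc_V V t) (myc_E V E t)"
  unfolding graph_def [of "myc_V V t"] myc_V_eq
  by (auto simp: graph_def myc_E_def split: option.splits)

lemma twins_myc_layer:
  assumes G: "graph V E" and uv: "twins V E u v" and "s \<le> t"
  shows "twins (myc_V V t) (myc_E V E t) (Some (u, s)) (Some (v, s))"
proof -
  have "myc_E V E t (Some (u, s)) y \<longleftrightarrow> myc_E V E t (Some (v, s)) y" for y
    using uv twins_adj_iff[OF G uv] unfolding twins_def
    by (cases y) (auto simp: myc_E_def)
  then show ?thesis using uv \<open>s \<le> t\<close> unfolding twins_def open_nbhd_def by auto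
qed

lemma twins_myc_isolated_low:
  assumes "isolated V E u" "isolated V E v" "s < t" "r < t"
  shows "twins (myc_V V t) (myc_E V E t) (Some (u, s)) (Some (v, r))"
proof -
  have "\<not> myc_E V E t (Some (w, q)) y" if "isolated V E w" "q < t" for w q y
    using that unfolding isolated_def by (cases y) (auto simp: myc_E_def)
  then show ?thesis using assms unfolding twins_def open_nbhd_def isolated_def by auto
qed

primrec graph_ball :: "'b set \<Rightarrow> ('b \<Rightarrow> 'b \<Rightarrow> bool) \<Rightarrow> 'b \<Rightarrow> nat \<Rightarrow> 'b set" where
  "graph_ball V E x 0 = {x}"
| "graph_ball V E x (Suc j) = graph_ball V E x j \<union> {y \<in> V. \<exists>z \<in> graph_ball V E x j. E z y}"

lemma graph_ball_subset: "x \<in> V \<Longrightarrow> graph_ball V E x j \<subseteq> V"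
  by (induction j) auto

lemma automorphism_graph_ball:
  assumes f: "automorphism V E f" and x: "x \<in> V" "f x = x"
  shows "y \<in> V \<Longrightarrow> f y \<in> graph_ball V E x j \<longleftrightarrow> y \<in> graph_ball V E x j"
proof (induction j arbitrary: y)
  case 0
  then show ?case using automorphism_eq_iff[OF f _ x(1)] x(2) by auto
next
  case (Suc j)
  let ?B = "graph_ball V E x j"
  have B: "?B \<subseteq> V" by (rule graph_ball_subset[OF x(1)])
  have "(\<exists>z\<in>?B. E z (f y)) \<longleftrightarrow> (\<exists>z\<in>?B. E (f z) (f y))"
  proof
    assume "\<exists>z\<in>?B. E z (f y)"
    then obtain z where z: "z \<in> ?B" "E z (f y)" by blast
    then obtain z' where "z' \<in> V" "f z' = z" using automorphism_surj[OF f] B by blast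
    with z Suc.IH show "\<exists>z\<in>?B. E (f z) (f y)" by auto
  next
    assume "\<exists>z\<in>?B. E (f z) (f y)"
    then show "\<exists>z\<in>?B. E z (f y)" using Suc.IH B by blast
  qed
  also have "\<dots> \<longleftrightarrow> (\<exists>z\<in>?B. E z y)"
    using automorphism_adj_iff[OF f _ Suc.prems] B by blast
  finally show ?case using Suc.IH[OF Suc.prems] automorphism_mem[OF f Suc.prems] Suc.prems by simp
qed

lemma myc_apex_ball:
  assumes G: "graph V E"
  shows "x \<in> graph_ball (myc_V V t) (myc_E V E t) None (Suc j) \<longleftrightarrow>
    x = None \<or> (\<exists>v s. x = Some (v, s) \<and> v \<in> V \<and> s \<le> t \<and> (s = t \<or> (\<exists>u. E v u) \<and> t \<le> s + j))"
    (is "_ \<longleftrightarrow> ?P j x")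
proof (induction j arbitrary: x)
  case 0
  then show ?case by (cases x) (auto simp: myc_E_def)
next
  case (Suc j)
  let ?B = "graph_ball (myc_V V t) (myc_E V E t) None (Suc j)"
  have "x \<in> graph_ball (myc_V V t) (myc_E V E t) None (Suc (Suc j)) \<longleftrightarrow>
      x \<in> ?B \<or> (x \<in> myc_V V t \<and> (\<exists>z\<in>?B. myc_E V E t z x))"
    by (simp only: graph_ball.simps(2)[of _ _ _ "Suc j"] Un_iff mem_Collect_eq)
  also have "\<dots> \<longleftrightarrow> ?P j x \<or> (x \<in> myc_V V t \<and> (\<exists>z. ?P j z \<and> myc_E V E t z x))"
    by (simp only: Bex_def Suc.IH)
  also have "\<dots> \<longleftrightarrow> ?P (Suc j) x"
  proof
    assume "?P j x \<or> (x \<in> myc_V V t \<and> (\<exists>z. ?P j z \<and> myc_E V E t z x))"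
    then consider "?P j x" | z v s where "x = Some (v, s)" "?P j z" "myc_E V E t z x"
      by (metis myc_E_simps(4) option.exhaust surj_pair)
    then show "?P (Suc j) x"
    proof cases
      case (2 z v s)
      show ?thesis
      proof (cases z)
        case (Some p)
        with 2 obtain u r where "z = Some (u, r)" "E u v" "(r = 0 \<and> s = 0) \<or> s = r + 1 \<or> r = s + 1"
          by (cases p) auto
        with 2 show ?thesis using graph_adj_sym[OF G] by auto
      qed (use 2 in auto)
    qed auto
  next
    assume P: "?P (Suc j) x"
    show "?P j x \<or> (x \<in> myc_V V t \<and> (\<exists>z. ?P j z \<and> myc_E V E t z x))"
    proof (cases "?P j x")
      case False
      then obtain v s u where x: "x = Some (v, s)" "v \<in> V" "E v u" "t = s + Suc j"
        using P by auto
      then have "u \<in> V" "E u v" using graph_adj_mem[OF G] graph_adj_sym[OF G] by auto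
      then have "?P j (Some (u, s + 1)) \<and> myc_E V E t (Some (u, s + 1)) x"
        using x by auto
      moreover have "x \<in> myc_V V t" using x by simp
      ultimately show ?thesis by blast
    qed simp
  qed
  finally show ?case .
qed

lemma myc_unique_neighbour_apex:
  assumes ab: "a \<in> V" "b \<in> V" "a \<noteq> b" and y: "y \<in> myc_V V t"
    and nb: "\<And>z. z \<in> myc_V V t \<Longrightarrow> myc_E V E t x z \<longleftrightarrow> z = y"
  shows "y = None"
proof (cases x)
  case None
  then have "Some (a, t) = y" "Some (b, t) = y" using nb[of "Some (a, t)"] nb[of "Some (b, t)"] ab by auto
  with ab show ?thesis by auto
next
  case (Some p)
  then obtain v s where x: "x = Some (v, s)" by (cases p) auto
  show ?thesis
  proof (rule ccontr)
    assume "y \<noteq> None"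
    then obtain u r where "y = Some (u, r)" by auto
    then have adj: "E v u" "u \<in> V" "v \<in> V" "s \<le> t" using nb[OF y] x by auto
    show False
    proof (cases "s = t")
      case True
      then have "None = y" using nb[of None] x adj by simp
      with \<open>y \<noteq> None\<close> show False by simp
    next
      case False
      then have "Some (u, s + 1) = y" using nb[of "Some (u, s + 1)"] x adj by simp
      moreover have "Some (u, s - 1) = y" using nb[of "Some (u, s - 1)"] x adj by (cases s) auto
      ultimately show False by auto
    qed
  qed
qed

lemma myc_automorphism_fixes_apex:
  assumes G: "graph V E" and ab: "a \<in> V" "b \<in> V" "a \<noteq> b" and i: "isolated V E i"
    and f: "automorphism (myc_V V t) (myc_E V E t) f"
  shows "f None = None"
proof (rule myc_unique_neighbour_apex[OF ab])
  let ?p = "Some (i, t)"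
  have p: "?p \<in> myc_V V t" using i unfolding isolated_def by simp
  have p_nb: "myc_E V E t ?p z \<longleftrightarrow> z = None" for z
    using i graph_adj_mem[OF G] unfolding isolated_def by (cases z) (auto simp: myc_E_def)
  show "f None \<in> myc_V V t" using automorphism_mem[OF f] by simp
  fix z assume "z \<in> myc_V V t"
  then obtain z' where z': "z' \<in> myc_V V t" "f z' = z" using automorphism_surj[OF f] by blast
  then show "myc_E V E t (f ?p) z \<longleftrightarrow> z = f None"
    using automorphism_adj_iff[OF f p z'(1)] automorphism_eq_iff[OF f z'(1)] p_nb by auto
qed

lemma myc_automorphism_non_apex:
  assumes f: "automorphism (myc_V V t) (myc_E V E t) f" "f None = None" and "v \<in> V" "s \<le> t"
  obtains v' s' where "f (Some (v, s)) = Some (v', s')" "v' \<in> V" "s' \<le> t"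
proof -
  have "f (Some (v, s)) \<in> myc_V V t" "f (Some (v, s)) \<noteq> None"
    using automorphism_mem[OF f(1)] automorphism_eq_iff[OF f(1), of _ None] f(2) assms by auto
  then show ?thesis using that by (auto simp: myc_V_def)
qed

lemma myc_automorphism_layer:
  assumes G: "graph V E" and f: "automorphism (myc_V V t) (myc_E V E t) f" "f None = None"
    and v: "v \<in> V" "s \<le> t" "s = t \<or> (\<exists>u. E v u)"
  obtains v' where "f (Some (v, s)) = Some (v', s)" "v' \<in> V"
proof -
  obtain v' s' where fv: "f (Some (v, s)) = Some (v', s')" "v' \<in> V" "s' \<le> t"
    using myc_automorphism_non_apex[OF f v(1,2)] .
  have ball: "(s' = t \<or> (\<exists>u. E v' u) \<and> t \<le> s' + j) \<longleftrightarrow> (s = t \<or> (\<exists>u. E v u) \<and> t \<le> s + j)" for j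
    using automorphism_graph_ball[OF f(1) myc_V_simps(2) f(2), of "Some (v, s)" "Suc j"] fv v
    by (simp del: graph_ball.simps add: myc_apex_ball[OF G])
  from ball[of "t - s"] have "s \<le> s'" using v fv by auto
  moreover have "s' \<le> s"
  proof (cases "s = t")
    case False
    with ball[of "t - s"] ball[of "t - s - 1"] show ?thesis using v fv by auto
  qed (use fv in simp)
  ultimately show ?thesis using that fv by simp
qed

lemma myc_automorphism_isolated_low:
  assumes G: "graph V E" and f: "automorphism (myc_V V t) (myc_E V E t) f" "f None = None"
    and v: "isolated V E v" "s < t"
  obtains v' s' where "f (Some (v, s)) = Some (v', s')" "isolated V E v'" "s' < t"
proof -
  have vV: "v \<in> V" using v unfolding isolated_def by blast
  obtain v' s' where fv: "f (Some (v, s)) = Some (v', s')" "v' \<in> V" "s' \<le> t"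
    using myc_automorphism_non_apex[OF f vV less_imp_le[OF v(2)]] .
  have "\<not> (s' = t \<or> (\<exists>u. E v' u) \<and> t \<le> s' + t)"
    using automorphism_graph_ball[OF f(1) myc_V_simps(2) f(2), of "Some (v, s)" "Suc t"] fv v vV
    by (auto simp del: graph_ball.simps simp: myc_apex_ball[OF G] isolated_def dest: graph_adj_mem[OF G])
  then show ?thesis
    using that fv graph_adj_mem[OF G] unfolding isolated_def by fastforce
qed

lemma myc_base_layer_automorphism:
  assumes G: "graph V E" and f: "automorphism (myc_V V t) (myc_E V E t) f"
    and \<sigma>: "\<And>v. v \<in> V \<Longrightarrow> f (Some (v, 0)) = Some (\<sigma> v, 0)"
  shows "automorphism V E \<sigma>"
proof -
  have into: "\<sigma> ` V \<subseteq> V" using automorphism_mem[OF f, of "Some (_, 0)"] \<sigma> by force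
  have inj: "inj_on \<sigma> V"
    using automorphism_eq_iff[OF f] \<sigma> by (intro inj_onI) (metis myc_V_simps(1) zero_le Pair_inject option.inject)
  have "\<sigma> ` V = V" using endo_inj_surj[OF _ into inj] G unfolding graph_def by blast
  moreover have "E (\<sigma> x) (\<sigma> y) \<longleftrightarrow> E x y" if "x \<in> V" "y \<in> V" for x y
    using automorphism_adj_iff[OF f, of "Some (x, 0)" "Some (y, 0)"] \<sigma> into that by auto
  ultimately show ?thesis using inj unfolding automorphism_def bij_betw_def by blast
qed

lemma myc_automorphism_twins_above_fixed_layer:
  assumes G: "graph V E" and f: "automorphism (myc_V V t) (myc_E V E t) f"
    and fixed: "\<And>u. u \<in> V \<Longrightarrow> f (Some (u, s)) = Some (u, s)"
    and v: "v \<in> V" "v' \<in> V" "s < t" "f (Some (v, s + 1)) = Some (v', s + 1)"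
  shows "twins V E v v'"
proof -
  have "E v x \<longleftrightarrow> E v' x" if x: "x \<in> V" for x
  proof -
    have "E v x \<longleftrightarrow> myc_E V E t (Some (x, s)) (Some (v, s + 1))"
      using x v graph_adj_sym[OF G] by auto
    also have "\<dots> \<longleftrightarrow> myc_E V E t (Some (x, s)) (Some (v', s + 1))"
      using automorphism_adj_iff[OF f, of "Some (x, s)" "Some (v, s + 1)"] fixed[OF x] x v by simp
    also have "\<dots> \<longleftrightarrow> E v' x"
      using x v graph_adj_sym[OF G] by auto
    finally show ?thesis .
  qed
  then show ?thesis using v unfolding twins_def open_nbhd_def by auto
qed

definition myc_det_set :: "'a set \<Rightarrow> 'a \<Rightarrow> nat \<Rightarrow> ('a \<times> nat) option set" where
  "myc_det_set S i t = Some ` (S \<times> {..t} \<union> {i} \<times> {1..<t})"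

lemma mem_myc_det_set:
  "Some (v, s) \<in> myc_det_set S i t \<longleftrightarrow> (v \<in> S \<and> s \<le> t) \<or> (v = i \<and> 1 \<le> s \<and> s < t)"
  "None \<notin> myc_det_set S i t"
  unfolding myc_det_set_def by auto

lemma card_myc_det_set:
  assumes "finite S" "i \<notin> S"
  shows "card (myc_det_set S i t) = (t + 1) * card S + (t - 1)"
proof -
  have "card (myc_det_set S i t) = card (S \<times> {..t} \<union> {i} \<times> {1..<t})"
    unfolding myc_det_set_def by (rule card_image) (simp add: inj_on_def)
  also have "\<dots> = card (S \<times> {..t}) + card ({i} \<times> {1..<t})"
    by (rule card_Un_disjoint) (use assms in auto)
  also have "\<dots> = (t + 1) * card S + (t - 1)"
    by (simp add: card_cartesian_product)
  finally show ?thesis .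
qed

locale myc_automorphism_fixing_det_set =
  fixes V :: "'a set" and E :: "'a \<Rightarrow> 'a \<Rightarrow> bool" and t :: nat and S :: "'a set" and i0 :: 'a
    and f :: "('a \<times> nat) option \<Rightarrow> ('a \<times> nat) option"
  assumes G: "graph V E" and t: "1 \<le> t"
    and S_det: "determining_set V E S" and S_cover: "twin_cover V E S"
    and i0: "isolated V E i0" "i0 \<notin> S"
    and f: "automorphism (myc_V V t) (myc_E V E t) f" and apex: "f None = None"
    and fixes_det_set: "\<And>y. y \<in> myc_det_set S i0 t \<Longrightarrow> f y = y"
begin

lemma fixed_if_image_in_det_set: "x \<in> myc_V V t \<Longrightarrow> f x \<in> myc_det_set S i0 t \<Longrightarrow> f x = x"
  using automorphism_fixed_if_image_fixed[OF f] fixes_det_set by blast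

lemma isolated_low_outside_det_set:
  "isolated V E v \<Longrightarrow> s < t \<Longrightarrow> Some (v, s) \<notin> myc_det_set S i0 t \<Longrightarrow> v = i0 \<and> s = 0"
  using twin_cover_isolated_mem[OF S_cover _ i0] by (fastforce simp: mem_myc_det_set)

lemma isolated_low_fixed:
  assumes v: "isolated V E v" "s < t"
  shows "f (Some (v, s)) = Some (v, s)"
proof -
  have x: "Some (v, s) \<in> myc_V V t" using v unfolding isolated_def by simp
  obtain v' s' where fv: "f (Some (v, s)) = Some (v', s')" "isolated V E v'" "s' < t"
    using myc_automorphism_isolated_low[OF G f apex v] .
  show ?thesis
  proof (cases "f (Some (v, s)) \<in> myc_det_set S i0 t")
    case True
    then show ?thesis using fixed_if_image_in_det_set[OF x] by blast
  next
    case False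
    then have "f (Some (v, s)) = Some (i0, 0)" using isolated_low_outside_det_set fv by metis
    moreover have "Some (v, s) \<in> myc_det_set S i0 t \<or> Some (v, s) = Some (i0, 0)"
      using isolated_low_outside_det_set[OF v] by blast
    ultimately show ?thesis using fixes_det_set by auto
  qed
qed

lemma base_layer_fixed:
  assumes v: "v \<in> V"
  shows "f (Some (v, 0)) = Some (v, 0)"
proof -
  have "\<exists>v'. f (Some (u, 0)) = Some (v', 0)" if u: "u \<in> V" for u
  proof (cases "\<exists>w. E u w")
    case True
    then show ?thesis using myc_automorphism_layer[OF G f apex u] by (metis zero_le)
  next
    case False
    then have "isolated V E u" using u graph_adj_mem[OF G] unfolding isolated_def by blast
    then show ?thesis using isolated_low_fixed t by auto
  qed
  then obtain \<sigma> where \<sigma>: "\<And>u. u \<in> V \<Longrightarrow> f (Some (u, 0)) = Some (\<sigma> u, 0)" by metis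
  have "\<forall>u\<in>S. \<sigma> u = u"
  proof
    fix u assume "u \<in> S"
    then have "f (Some (u, 0)) = Some (u, 0)" "u \<in> V"
      using fixes_det_set S_cover unfolding twin_cover_def by (auto simp: mem_myc_det_set)
    then show "\<sigma> u = u" using \<sigma> by simp
  qed
  then have "\<sigma> v = v"
    using S_det myc_base_layer_automorphism[OF G f \<sigma>] v unfolding determining_set_def by blast
  then show ?thesis using \<sigma>[OF v] by simp
qed

lemma layers_fixed:
  "s \<le> t \<Longrightarrow> v \<in> V \<Longrightarrow> (v, s) \<noteq> (i0, t) \<Longrightarrow> f (Some (v, s)) = Some (v, s)"
proof (induction s arbitrary: v)
  case 0
  then show ?case using base_layer_fixed by blast
next
  case (Suc s)
  have below: "f (Some (u, s)) = Some (u, s)" if "u \<in> V" for u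
    using Suc.IH[OF _ that] Suc.prems(1) by simp
  have x: "Some (v, Suc s) \<in> myc_V V t" using Suc.prems by simp
  consider "v \<in> S" | "\<exists>u. E v u" | "isolated V E v" "Suc s < t" | "isolated V E v" "v \<notin> S" "Suc s = t"
    using Suc.prems graph_adj_mem[OF G] unfolding isolated_def by fastforce
  then show ?case
  proof cases
    case 1
    then show ?thesis using fixes_det_set Suc.prems by (simp add: mem_myc_det_set)
  next
    case 2
    then obtain v' where v': "f (Some (v, Suc s)) = Some (v', Suc s)" "v' \<in> V"
      using myc_automorphism_layer[OF G f apex Suc.prems(2,1)] by blast
    then have "twins V E v v'"
      using myc_automorphism_twins_above_fixed_layer[OF G f below] Suc.prems by simp
    then have "v' = v \<or> v \<in> S \<or> v' \<in> S" using twin_coverD[OF S_cover] by metis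
    then show ?thesis
      using v' fixes_det_set fixed_if_image_in_det_set[OF x] Suc.prems(1)
      by (auto simp: mem_myc_det_set)
  next
    case 3
    then show ?thesis using isolated_low_fixed by blast
  next
    case 4
    then show ?thesis using twin_cover_isolated_mem[OF S_cover _ i0] Suc.prems(3) by blast
  qed
qed

lemma is_id:
  assumes x: "x \<in> myc_V V t"
  shows "f x = x"
proof -
  have fixed: "f y = y" if y: "y \<in> myc_V V t" "y \<noteq> Some (i0, t)" for y
    using y apex layers_fixed by (cases y) (auto simp: myc_V_def)
  show ?thesis
  proof (cases "x = Some (i0, t)")
    case True
    then show ?thesis using automorphism_fixed_if_image_fixed[OF f x] fixed automorphism_mem[OF f x] by metis
  qed (use fixed x in blast)
qed

end

lemma determining_set_myc_det_set:
  assumes G: "graph V E" and t: "1 \<le> t" and ab: "a \<in> V" "b \<in> V" "a \<noteq> b"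
    and S_det: "determining_set V E S" and S_cover: "twin_cover V E S"
    and i0: "isolated V E i0" "i0 \<notin> S"
  shows "determining_set (myc_V V t) (myc_E V E t) (myc_det_set S i0 t)"
  unfolding determining_set_def
proof (intro conjI allI impI)
  show "myc_det_set S i0 t \<subseteq> myc_V V t"
    using S_cover i0 unfolding myc_det_set_def twin_cover_def isolated_def by auto
  fix f assume "automorphism (myc_V V t) (myc_E V E t) f \<and> (\<forall>y\<in>myc_det_set S i0 t. f y = y)"
  then interpret myc_automorphism_fixing_det_set V E t S i0 f
    using G t S_det S_cover i0 myc_automorphism_fixes_apex[OF G ab i0(1)] by unfold_locales auto
  show "\<forall>x\<in>myc_V V t. f x = x" using is_id by blast
qed

lemma twin_cover_myc_layer:
  assumes G: "graph V E" and D: "twin_cover (myc_V V t) (myc_E V E t) D" and "s \<le> t"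
  shows "twin_cover V E {v \<in> V. Some (v, s) \<in> D}"
  unfolding twin_cover_def
proof (intro conjI allI impI)
  fix u v assume uv: "u \<noteq> v \<and> twins V E u v"
  then have "twins (myc_V V t) (myc_E V E t) (Some (u, s)) (Some (v, s))"
    using twins_myc_layer[OF G _ \<open>s \<le> t\<close>] by blast
  then have "Some (u, s) \<in> D \<or> Some (v, s) \<in> D"
    using D uv unfolding twin_cover_def by simp
  with uv show "u \<in> {v \<in> V. Some (v, s) \<in> D} \<or> v \<in> {v \<in> V. Some (v, s) \<in> D}"
    unfolding twins_def by blast
qed auto

lemma myc_twin_cover_low_isolated:
  assumes D: "twin_cover (myc_V V t) (myc_E V E t) D" and t: "1 \<le> t"
  obtains s0 where "s0 < t" "\<And>s i. s < t \<Longrightarrow> s \<noteq> s0 \<Longrightarrow> isolated V E i \<Longrightarrow> Some (i, s) \<in> D"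
proof (cases "\<exists>s1 i1. s1 < t \<and> isolated V E i1 \<and> Some (i1, s1) \<notin> D")
  case True
  then obtain s1 i1 where s1: "s1 < t" "isolated V E i1" "Some (i1, s1) \<notin> D" by auto
  have "Some (i, s) \<in> D" if "s < t" "s \<noteq> s1" "isolated V E i" for s i
  proof -
    have "Some (i1, s1) \<noteq> Some (i, s)" using that(2) by simp
    then show ?thesis
      using twin_coverD[OF D _ twins_myc_isolated_low[OF s1(2) that(3) s1(1) that(1)]] s1(3) by blast
  qed
  with s1(1) show ?thesis using that by blast
qed (use t that in auto)

lemma sum_card_layers_le:
  fixes t :: nat
  assumes "finite D"
  shows "(\<Sum>s\<le>t. card {v \<in> V. Some (v, s) \<in> D}) \<le> card D"
proof -
  let ?L = "\<lambda>s. {v \<in> V. Some (v, s) \<in> D}"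
  have fin: "finite (?L s)" for s
    using finite_vimageI[OF assms, of "\<lambda>v. Some (v, s)"] by (rule finite_subset[rotated]) (auto simp: inj_on_def)
  have "(\<Sum>s\<le>t. card (?L s)) = card (Sigma {..t} ?L)"
    using fin by (intro card_SigmaI[symmetric]) auto
  also have "\<dots> \<le> card D"
    by (rule card_inj_on_le[of "\<lambda>(s, v). Some (v, s)"]) (auto simp: inj_on_def assms)
  finally show ?thesis .
qed

lemma card_twin_cover_myc_ge:
  assumes G: "graph V E" and t: "1 \<le> t" and S: "min_twin_cover V E S" and i: "isolated V E i"
    and D: "twin_cover (myc_V V t) (myc_E V E t) D" "finite D"
  shows "(t + 1) * card S + (t - 1) \<le> card D"
proof -
  define L where "L s = {v \<in> V. Some (v, s) \<in> D}" for s
  obtain s0 where s0: "s0 < t"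
    and iso_D: "\<And>s j. s < t \<Longrightarrow> s \<noteq> s0 \<Longrightarrow> isolated V E j \<Longrightarrow> Some (j, s) \<in> D"
    using myc_twin_cover_low_isolated[OF D(1) t] by blast
  have iso_L: "j \<in> L s" if "s < t" "s \<noteq> s0" "isolated V E j" for s j
    using iso_D[OF that] that(3) unfolding L_def isolated_def by blast
  have cover: "twin_cover V E (L s)" if "s \<le> t" for s
    unfolding L_def by (rule twin_cover_myc_layer[OF G D(1) that])
  have fin: "finite (L s)" for s
    using G unfolding L_def graph_def by simp
  have bound: "card S + (if s \<in> {..<t} - {s0} then 1 else 0) \<le> card (L s)" if "s \<le> t" for s
  proof (cases "s \<in> {..<t} - {s0}")
    case True
    then show ?thesis using min_twin_cover_card_less[OF S cover[OF that] fin i] iso_L by simp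
  next
    case False
    then show ?thesis using S cover[OF that] unfolding if_not_P[OF False] min_twin_cover_def by simp
  qed
  have "(\<Sum>s\<le>t. if s \<in> {..<t} - {s0} then 1 else 0) = card ({..<t} - {s0})"
    by (simp add: sum.If_cases) (auto intro: arg_cong[where f = card])
  also have "\<dots> = t - 1"
    using s0 by simp
  finally have "(t + 1) * card S + (t - 1) = (\<Sum>s\<le>t. card S + (if s \<in> {..<t} - {s0} then 1 else 0))"
    by (simp add: sum.distrib)
  also have "\<dots> \<le> (\<Sum>s\<le>t. card (L s))"
    by (rule sum_mono) (rule bound, simp)
  also have "\<dots> \<le> card D"
    unfolding L_def by (rule sum_card_layers_le[OF D(2)])
  finally show ?thesis .
qed

lemma det_num_myc:
  assumes G: "graph V E" and t: "1 \<le> t" and ab: "a \<in> V" "b \<in> V" "a \<noteq> b"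
    and i: "isolated V E i" and S: "min_twin_cover V E S" "determining_set V E S"
  shows "det_num (myc_V V t) (myc_E V E t) = (t + 1) * card S + (t - 1)"
proof -
  obtain i0 where i0: "isolated V E i0" "i0 \<notin> S"
    using min_twin_cover_misses_isolated[OF G S(1) i] .
  have S_cover: "twin_cover V E S" using S(1) unfolding min_twin_cover_def by blast
  then have "finite S" using G finite_subset unfolding twin_cover_def graph_def by blast
  have fin: "finite (myc_V V t)" using graph_myc[OF G] unfolding graph_def by blast
  have "det_num (myc_V V t) (myc_E V E t) = card (myc_det_set S i0 t)"
  proof (rule det_num_eqI[OF fin determining_set_myc_det_set[OF G t ab S(2) S_cover i0]])
    fix D assume D: "determining_set (myc_V V t) (myc_E V E t) D"
    then have "finite D" using fin finite_subset unfolding determining_set_def by blast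
    with D show "card (myc_det_set S i0 t) \<le> card D"
      using card_myc_det_set[OF \<open>finite S\<close> i0(2)] card_twin_cover_myc_ge[OF G t S(1) i]
        determining_set_imp_twin_cover[OF graph_myc[OF G]] by simp
  qed
  then show ?thesis using card_myc_det_set[OF \<open>finite S\<close> i0(2)] by simp
qed

theorem mainTheorem7:
  fixes V :: "'a set" and E :: "'a \<Rightarrow> 'a \<Rightarrow> bool" and t :: nat
  assumes "graph V E"
    and "\<exists>v. isolated V E v"
    and "has_distinct_twins V E"
    and "\<exists>S. min_twin_cover V E S \<and> determining_set V E S"
    and "t \<ge> 1"
  shows "det_num (myc_V V t) (myc_E V E t) = (t + 1) * det_num V E + t - 1"
proof -
  obtain S where S: "min_twin_cover V E S" "determining_set V E S" using assms(4) by blast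
  obtain i where i: "isolated V E i" using assms(2) by blast
  obtain a b where "a \<noteq> b" "twins V E a b" using assms(3) unfolding has_distinct_twins_def by blast
  then have ab: "a \<in> V" "b \<in> V" "a \<noteq> b" unfolding twins_def by auto
  have "det_num (myc_V V t) (myc_E V E t) = (t + 1) * card S + (t - 1)"
    using det_num_myc[OF assms(1,5) ab i S] .
  moreover have "det_num V E = card S" using det_num_eq_min_twin_cover[OF assms(1) S] .
  ultimately show ?thesis using assms(5) by simp
qed

end
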